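(* Let $n,m$ be positive integers, $S\subseteq S_n$ a subset containing the identity, and $G\le S_n$ the subgroup generated by $S$. If the player can win the $(S,m)$-game, then $|G|=1$, or $m=1$, or $(|G|,m)=(p^a,p^b)$ for some prime $p$ and positive integers $a,b$. Equivalently, if there are distinct primes $p,q$ with $p\mid |G|$ and $q\mid m$, the player cannot win.
   Context: The $(S,m)$-game: $n$ counters at positions $1,\dots,n$, each showing an element of $\mathbb{Z}_m$, so a configuration is a vector in $\mathbb{Z}_m^n$, initially arbitrary and unknown. Each turn the player chooses a move $y\in\mathbb{Z}_m^n$, added coordinatewise; then an adversarially chosen permutation $\sigma\in S$ (possibly different each turn) is applied, replacing $x$ by $x'$ with $x'_{\sigma(i)}=x_i$. The player wins if at some moment (including initially) all counters show $0$. A strategy is a finite sequence of moves; it is winning if it forces the zero configuration at some time for every initial configuration and every choice of permutations. "The player can win" means a winning finite sequence exists. *)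

theory Defs
  imports "HOL-Algebra.Sym_Groups" "HOL-Computational_Algebra.Primes"
begin

text \<open>A configuration is a
function nat => int, read modulo m (only positions 1..n matter).
A move y is added coordinatewise, then a permutation sigma (of {1..n}) is
applied: the new configuration x' satisfies x'(sigma i) = x i + y i,
i.e. x' = (x + y) composed with inv sigma.\<close>

definition game_turn :: "(nat \<Rightarrow> int) \<Rightarrow> (nat \<Rightarrow> nat) \<Rightarrow> (nat \<Rightarrow> int) \<Rightarrow> (nat \<Rightarrow> int)"
  where "game_turn y \<sigma> x = (\<lambda>i. x (inv_into UNIV \<sigma> i) + y (inv_into UNIV \<sigma> i))"

fun game_state :: "(nat \<Rightarrow> int) \<Rightarrow> (nat \<Rightarrow> int) list \<Rightarrow> (nat \<Rightarrow> nat \<Rightarrow> nat) \<Rightarrow> nat \<Rightarrow> (nat \<Rightarrow> int)"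
  where
    "game_state x ys \<sigma>s 0 = x"
  | "game_state x ys \<sigma>s (Suc t) = game_turn (ys ! t) (\<sigma>s t) (game_state x ys \<sigma>s t)"

definition all_zero :: "nat \<Rightarrow> nat \<Rightarrow> (nat \<Rightarrow> int) \<Rightarrow> bool"
  where "all_zero n m x \<longleftrightarrow> (\<forall>i\<in>{1..n}. x i mod int m = 0)"

text \<open>A finite sequence of moves ys is winning if for every initial
configuration and every choice of permutations from S, the zero
configuration appears at some time 0..length ys. (The adversary's
choices may depend on anything, in particular on the whole strategy and
the initial configuration; quantifying over all sequences covers this.)\<close>
definition winning_strategy :: "nat \<Rightarrow> nat \<Rightarrow> (nat \<Rightarrow> nat) set \<Rightarrow> (nat \<Rightarrow> int) list \<Rightarrow> bool"
  where "winning_strategy n m S ys \<longleftrightarrow>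
    (\<forall>x \<sigma>s. (\<forall>t. \<sigma>s t \<in> S) \<longrightarrow> (\<exists>t\<le>length ys. all_zero n m (game_state x ys \<sigma>s t)))"

definition player_can_win :: "nat \<Rightarrow> nat \<Rightarrow> (nat \<Rightarrow> nat) set \<Rightarrow> bool"
  where "player_can_win n m S \<longleftrightarrow> (\<exists>ys. winning_strategy n m S ys)"

end

theory Submission
  imports Defs "HOL-Algebra.Sylow" "HOL-Algebra.Multiplicative_Group"
begin

text \<open>Let \<open>p \<noteq> q\<close> be primes with \<open>p\<close> dividing \<open>|G|\<close> and \<open>q\<close> dividing \<open>m\<close>. By Cauchy's
  theorem \<open>G\<close> contains a permutation \<open>g\<close> of order \<open>p\<close>; fix \<open>j\<close> with \<open>g j \<noteq> j\<close>. Call a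
  configuration \<open>x\<close> balanced if \<open>x (\<tau> (g j)) \<equiv> x (\<tau> j) (mod q)\<close> for all \<open>\<tau> \<in> G\<close>
  (\<open>balanced G q j (g j) x\<close>). Balanced configurations form a \<open>G\<close>-stable group containing every zero configuration.
  If \<open>z\<close> is unbalanced, then so is \<open>z \<circ> \<sigma> - z\<close> for some \<open>\<sigma> \<in> S\<close>: otherwise this would hold
  for all \<open>\<sigma> \<in> G\<close>, and telescoping along the cycle of \<open>j\<close> under \<open>g\<close> would give
  \<open>p (z (g j) - z j) \<equiv> 0\<close>, making \<open>z\<close> balanced because \<open>q \<nmid> p\<close>. Hence, whatever move is
  played, every unbalanced configuration can be reached by the adversary (with \<open>\<sigma> = id\<close> or
  that \<open>\<sigma>\<close>) from an unbalanced one. Running the game backwards from an unbalanced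
  configuration yields an initial configuration and a choice of permutations for which no
  state is ever zero.\<close>

section \<open>Cauchy's theorem and permutation groups\<close>

lemma (in group) exists_element_of_prime_order:
  assumes fin: "finite (carrier G)" and p: "prime p" and dvd: "p dvd order G"
  shows "\<exists>x\<in>carrier G. x \<noteq> \<one> \<and> x [^] p = \<one>"
proof -
  from dvd obtain r where "order G = p ^ 1 * r" by auto
  then obtain H where H: "subgroup H G" and card_H: "card H = p"
    using sylow_thm[OF p is_group _ fin] by (metis power_one_right)
  have "H \<noteq> {\<one>}" using card_H p by auto
  moreover have "\<one> \<in> H" using H by (rule subgroup.one_closed)
  ultimately obtain x where xH: "x \<in> H" and x1: "x \<noteq> \<one>" by blast
  interpret H: group "G\<lparr>carrier := H\<rparr>" by (rule subgroup.subgroup_is_group[OF H is_group])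
  have "x [^]\<^bsub>G\<lparr>carrier := H\<rparr>\<^esub> order (G\<lparr>carrier := H\<rparr>) = \<one>"
    using H.pow_order_eq_1 xH by simp
  then have "x [^] p = \<one>" by (simp add: order_def card_H nat_pow_consistent[of x p H])
  with x1 xH subgroup.subset[OF H] show ?thesis by blast
qed

lemma sym_group_pow: "g [^]\<^bsub>sym_group n\<^esub> k = g ^^ k"
  by (induction k) (simp_all add: sym_group_def funpow_Suc_right del: funpow.simps)

lemma sym_subgroup_id: "subgroup G (sym_group n) \<Longrightarrow> id \<in> G"
  using subgroup.one_closed by (fastforce simp: sym_group_one)

lemma sym_subgroup_comp: "subgroup G (sym_group n) \<Longrightarrow> a \<in> G \<Longrightarrow> b \<in> G \<Longrightarrow> a \<circ> b \<in> G"
  using subgroup.m_closed by (fastforce simp: sym_group_mult)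

lemma sym_subgroup_permutes: "subgroup G (sym_group n) \<Longrightarrow> \<sigma> \<in> G \<Longrightarrow> \<sigma> permutes {1..n}"
  using subgroup.subset by (fastforce simp: sym_group_carrier)

lemma sym_subgroup_inv:
  "subgroup G (sym_group n) \<Longrightarrow> \<sigma> \<in> G \<Longrightarrow> inv_into UNIV \<sigma> \<in> G"
  using subgroup.m_inv_closed subgroup.subset sym_group_inv_equality by fastforce

lemma finite_sym_subgroup: "subgroup G (sym_group n) \<Longrightarrow> finite G"
  using subgroup.subset finite_subset finite_permutations[of "{1..n}"]
  by (fastforce simp: sym_group_def)

lemma sym_subgroup_exists_perm_of_prime_order:
  assumes G: "subgroup G (sym_group n)" and p: "prime p" and dvd: "p dvd card G"
  shows "\<exists>g\<in>G. g \<noteq> id \<and> g ^^ p = id"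
proof -
  interpret G: group "sym_group n\<lparr>carrier := G\<rparr>"
    by (rule subgroup.subgroup_is_group[OF G sym_group_is_group])
  have "\<exists>g\<in>G. g \<noteq> id \<and> g [^]\<^bsub>sym_group n\<lparr>carrier := G\<rparr>\<^esub> p = id"
    using G.exists_element_of_prime_order[OF _ p] finite_sym_subgroup[OF G] dvd
    by (simp add: order_def sym_group_one)
  moreover have "g [^]\<^bsub>sym_group n\<lparr>carrier := G\<rparr>\<^esub> k = g ^^ k" for g k
    using monoid.nat_pow_consistent[OF group.is_monoid[OF sym_group_is_group]] sym_group_pow
    by metis
  ultimately show ?thesis by simp
qed

section \<open>Two distinct primes\<close>

lemma prime_power_or_other_prime_factor:
  fixes q N :: nat
  assumes "prime q" "N > 0"
  shows "(\<exists>k. N = q ^ k) \<or> (\<exists>p. prime p \<and> p \<noteq> q \<and> p dvd N)"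
proof -
  obtain k r where r: "\<not> q dvd r" "N = r * q ^ k"
    using prime_power_canonical[OF assms] by blast
  show ?thesis
  proof (cases "r = 1")
    case False
    then obtain p where "prime p" "p dvd r" using prime_factor_nat by blast
    with r show ?thesis by auto
  qed (use r in auto)
qed

lemma distinct_prime_factors_unless_prime_powers:
  fixes N m :: nat
  assumes "N > 0" "m > 0" "N \<noteq> 1" "m \<noteq> 1"
    and "\<not> (\<exists>p a b. prime p \<and> a > 0 \<and> b > 0 \<and> N = p ^ a \<and> m = p ^ b)"
  shows "\<exists>p q. prime p \<and> prime q \<and> p \<noteq> q \<and> p dvd N \<and> q dvd m"
proof -
  obtain q where q: "prime q" "q dvd m" using prime_factor_nat assms(4) by blast
  consider a where "N = q ^ a" | p where "prime p" "p \<noteq> q" "p dvd N"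
    using prime_power_or_other_prime_factor[OF q(1) assms(1)] by blast
  then show ?thesis
  proof cases
    case (1 a)
    then have "a > 0" using assms(3) by (cases a) auto
    consider b where "m = q ^ b" | p where "prime p" "p \<noteq> q" "p dvd m"
      using prime_power_or_other_prime_factor[OF q(1) assms(2)] by blast
    then show ?thesis
    proof cases
      case (1 b)
      then have "b > 0" using assms(4) by (cases b) auto
      with \<open>N = q ^ a\<close> \<open>a > 0\<close> 1 q(1) assms(5) show ?thesis by blast
    next
      case 2
      with \<open>N = q ^ a\<close> \<open>a > 0\<close> q(1) show ?thesis by (metis dvd_power)
    qed
  next
    case 2
    with q show ?thesis by blast
  qed
qed

section \<open>An invariant the adversary can preserve\<close>

definition balanced :: "(nat \<Rightarrow> nat) set \<Rightarrow> int \<Rightarrow> nat \<Rightarrow> nat \<Rightarrow> (nat \<Rightarrow> int) \<Rightarrow> bool"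
  where "balanced G q j k x \<longleftrightarrow> (\<forall>\<tau>\<in>G. q dvd x (\<tau> k) - x (\<tau> j))"

lemma balanced_add:
  assumes "balanced G q j k x" "balanced G q j k y"
  shows "balanced G q j k (\<lambda>i. x i + y i)"
proof -
  have "q dvd (x (\<tau> k) - x (\<tau> j)) + (y (\<tau> k) - y (\<tau> j))" if "\<tau> \<in> G" for \<tau>
    using assms that unfolding balanced_def by (blast intro: dvd_add)
  then show ?thesis unfolding balanced_def by (simp add: algebra_simps)
qed

lemma balanced_uminus:
  "balanced G q j k x \<Longrightarrow> balanced G q j k (\<lambda>i. - x i)"
  unfolding balanced_def by (auto simp: dvd_diff_commute)

lemma balanced_diff:
  "balanced G q j k x \<Longrightarrow> balanced G q j k y \<Longrightarrow> balanced G q j k (\<lambda>i. x i - y i)"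
  using balanced_add[OF _ balanced_uminus] by simp

lemma balanced_comp:
  assumes "subgroup G (sym_group n)" "\<rho> \<in> G" "balanced G q j k x"
  shows "balanced G q j k (\<lambda>i. x (\<rho> i))"
  using assms sym_subgroup_comp unfolding balanced_def by (metis comp_apply)

lemma balanced_if_all_zero:
  assumes G: "subgroup G (sym_group n)" and "j \<in> {1..n}" "k \<in> {1..n}"
    and "q dvd int m" and "all_zero n m x"
  shows "balanced G q j k x"
  unfolding balanced_def
proof
  fix \<tau> assume "\<tau> \<in> G"
  then have "\<tau> k \<in> {1..n}" "\<tau> j \<in> {1..n}"
    using assms(2,3) permutes_in_image[OF sym_subgroup_permutes[OF G]] by blast+
  moreover have "q dvd x i" if "i \<in> {1..n}" for i
    using assms(5) that dvd_trans[OF assms(4)] unfolding all_zero_def by (simp add: dvd_eq_mod_eq_0)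
  ultimately have "q dvd x (\<tau> k)" "q dvd x (\<tau> j)" by blast+
  then show "q dvd x (\<tau> k) - x (\<tau> j)" by (rule dvd_diff)
qed

lemma balanced_differences_generate:
  assumes G: "subgroup G (sym_group n)" and S: "S \<subseteq> G"
    and diff_S: "\<forall>\<sigma>\<in>S. balanced G q j k (\<lambda>i. z (\<sigma> i) - z i)"
    and \<sigma>: "\<sigma> \<in> generate (sym_group n) S"
  shows "balanced G q j k (\<lambda>i. z (\<sigma> i) - z i)"
  using \<sigma>
proof (induction \<sigma> rule: generate.induct)
  case one
  then show ?case by (simp add: sym_group_one balanced_def)
next
  case (incl h)
  then show ?case using diff_S by blast
next
  case (inv h)
  have hG: "h \<in> G" and h: "h permutes {1..n}"
    using inv S sym_subgroup_permutes[OF G] by auto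
  have "balanced G q j k (\<lambda>i. - (z (h (inv_into UNIV h i)) - z (inv_into UNIV h i)))"
    using balanced_uminus balanced_comp[OF G sym_subgroup_inv[OF G hG]] diff_S inv
    by blast
  then have "balanced G q j k (\<lambda>i. z (inv_into UNIV h i) - z i)"
    by (simp add: permutes_inverses(1)[OF h])
  then show ?case using inv S G subgroup.subset by fastforce
next
  case (eng h1 h2)
  have "h2 \<in> G" using eng(2) S G group.generate_subgroup_incl[OF sym_group_is_group] by blast
  then have "balanced G q j k (\<lambda>i. (z (h1 (h2 i)) - z (h2 i)) + (z (h2 i) - z i))"
    using balanced_add balanced_comp[OF G] eng(3,4) by blast
  then show ?case by (simp add: sym_group_mult)
qed

lemma balanced_of_balanced_differences:
  fixes q :: int
  assumes G: "subgroup G (sym_group n)" and g: "g \<in> G" "g ^^ p = id"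
    and q: "prime q" "\<not> q dvd int p"
    and diff_G: "\<forall>\<sigma>\<in>G. balanced G q j (g j) (\<lambda>i. z (\<sigma> i) - z i)"
  shows "balanced G q j (g j) z"
  unfolding balanced_def
proof
  fix \<tau> assume \<tau>: "\<tau> \<in> G"
  define c where "c k = z (\<tau> ((g ^^ k) j))" for k
  define D where "D = z (g j) - z j"
  have pow_G: "g ^^ k \<in> G" for k
  proof (induction k)
    case 0
    show ?case using sym_subgroup_id[OF G] by (simp add: id_def)
  next
    case (Suc k)
    show ?case using sym_subgroup_comp[OF G g(1) Suc] by (simp add: comp_def)
  qed
  have step: "q dvd (c (Suc k) - c k) - D" for k
  proof -
    have "balanced G q j (g j) (\<lambda>i. z ((\<tau> \<circ> g ^^ k) i) - z i)"
      using diff_G sym_subgroup_comp[OF G \<tau> pow_G] by blast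
    then have "q dvd (z (\<tau> ((g ^^ k) (g j))) - z (g j)) - (z (\<tau> ((g ^^ k) j)) - z j)"
      unfolding balanced_def using sym_subgroup_id[OF G] by fastforce
    moreover have "(g ^^ k) (g j) = (g ^^ Suc k) j"
      by (simp add: funpow_Suc_right del: funpow.simps)
    ultimately show ?thesis by (simp add: c_def D_def algebra_simps)
  qed
  have "(\<Sum>k<p. (c (Suc k) - c k) - D) = (c p - c 0) - int p * D"
    using sum_lessThan_telescope[of c p] by (simp add: sum_subtractf del: sum_lessThan_telescope)
  also have "c p = c 0" by (simp add: c_def g(2))
  finally have "(\<Sum>k<p. (c (Suc k) - c k) - D) = - (int p * D)" by simp
  moreover have "q dvd (\<Sum>k<p. (c (Suc k) - c k) - D)"
    using step by (simp add: dvd_sum)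
  ultimately have "q dvd int p * D" by simp
  then have "q dvd D" using q prime_dvd_mult_iff by blast
  then have "q dvd (c (Suc 0) - c 0 - D) + D" using step[of 0] by (intro dvd_add)
  then have "q dvd c (Suc 0) - c 0" by simp
  then show "q dvd z (\<tau> (g j)) - z (\<tau> j)" by (simp add: c_def)
qed

lemma exists_generator_unbalancing_difference:
  fixes q :: int and n :: nat and S :: "(nat \<Rightarrow> nat) set"
  defines "G \<equiv> generate (sym_group n) S"
  assumes S: "S \<subseteq> carrier (sym_group n)" and g: "g \<in> G" "g ^^ p = id"
    and q: "prime q" "\<not> q dvd int p"
    and z: "\<not> balanced G q j (g j) z"
  shows "\<exists>\<sigma>\<in>S. \<not> balanced G q j (g j) (\<lambda>i. z (\<sigma> i) - z i)"
proof (rule ccontr)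
  assume "\<not> ?thesis"
  moreover have G: "subgroup G (sym_group n)"
    unfolding G_def by (rule group.generate_is_subgroup[OF sym_group_is_group S])
  moreover have "S \<subseteq> G"
    unfolding G_def using S by (auto intro: generate.incl)
  ultimately have "\<forall>\<sigma>\<in>G. balanced G q j (g j) (\<lambda>i. z (\<sigma> i) - z i)"
    using balanced_differences_generate unfolding G_def by blast
  with z show False using balanced_of_balanced_differences[OF G g q] by blast
qed

section \<open>The adversary's strategy\<close>

definition backward_invariant :: "(nat \<Rightarrow> nat) set \<Rightarrow> ((nat \<Rightarrow> int) \<Rightarrow> bool) \<Rightarrow> bool"
  where "backward_invariant S P \<longleftrightarrow>
    (\<forall>z y. P z \<longrightarrow> (\<exists>\<sigma>\<in>S. \<exists>x. P x \<and> game_turn y \<sigma> x = z))"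

lemma game_state_fun_upd_later:
  "t \<le> k \<Longrightarrow> game_state x ys (\<sigma>s(k := \<sigma>)) t = game_state x ys \<sigma>s t"
  by (induction t) auto

lemma backward_invariant_game_state:
  assumes inv: "backward_invariant S P" and "P z"
  shows "\<exists>x \<sigma>s. (\<forall>t. \<sigma>s t \<in> S) \<and> (\<forall>t\<le>k. P (game_state x ys \<sigma>s t)) \<and> game_state x ys \<sigma>s k = z"
  using \<open>P z\<close>
proof (induction k arbitrary: z)
  case 0
  then obtain \<sigma> where "\<sigma> \<in> S" using inv unfolding backward_invariant_def by blast
  with 0 show ?case by (intro exI[of _ z] exI[of _ "\<lambda>_. \<sigma>"]) auto
next
  case (Suc k)
  obtain \<sigma> x' where \<sigma>: "\<sigma> \<in> S" and "P x'" and turn: "game_turn (ys ! k) \<sigma> x' = z"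
    using inv Suc.prems unfolding backward_invariant_def by blast
  then obtain x \<sigma>s where \<sigma>s: "\<forall>t. \<sigma>s t \<in> S" and P: "\<forall>t\<le>k. P (game_state x ys \<sigma>s t)"
    and x': "game_state x ys \<sigma>s k = x'"
    using Suc.IH by blast
  have "\<forall>t. (\<sigma>s(k := \<sigma>)) t \<in> S" using \<sigma>s \<sigma> by simp
  moreover have "game_state x ys (\<sigma>s(k := \<sigma>)) (Suc k) = z"
    using x' turn by (simp add: game_state_fun_upd_later)
  moreover have "\<forall>t\<le>Suc k. P (game_state x ys (\<sigma>s(k := \<sigma>)) t)"
    using P Suc.prems calculation(2) by (auto simp: game_state_fun_upd_later le_Suc_eq)
  ultimately show ?case by blast
qed

lemma not_player_can_win_if_backward_invariant:
  assumes "backward_invariant S P" "P z" "\<And>x. P x \<Longrightarrow> \<not> all_zero n m x"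
  shows "\<not> player_can_win n m S"
  using backward_invariant_game_state[OF assms(1,2)] assms(3)
  unfolding player_can_win_def winning_strategy_def by metis

lemma backward_invariant_unbalanced:
  fixes q :: int and n :: nat and S :: "(nat \<Rightarrow> nat) set"
  defines "G \<equiv> generate (sym_group n) S"
  assumes S: "S \<subseteq> carrier (sym_group n)" "id \<in> S" and g: "g \<in> G" "g ^^ p = id"
    and q: "prime q" "\<not> q dvd int p"
  shows "backward_invariant S (\<lambda>x. \<not> balanced G q j (g j) x)"
  unfolding backward_invariant_def
proof (intro allI impI)
  fix z y assume z: "\<not> balanced G q j (g j) z"
  have turn: "game_turn y \<sigma> (\<lambda>i. z (\<sigma> i) - y i) = z" if "\<sigma> \<in> S" for \<sigma>
  proof -
    have "\<sigma> permutes {1..n}" using that S(1) by (auto simp: sym_group_carrier)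
    then have "surj \<sigma>" by (rule permutes_surj)
    then show ?thesis unfolding game_turn_def by (simp add: surj_f_inv_f)
  qed
  show "\<exists>\<sigma>\<in>S. \<exists>x. \<not> balanced G q j (g j) x \<and> game_turn y \<sigma> x = z"
  proof (cases "balanced G q j (g j) (\<lambda>i. z i - y i)")
    case False
    then show ?thesis using turn[OF S(2)] S(2) by fastforce
  next
    case True
    obtain \<sigma> where "\<sigma> \<in> S" and \<sigma>: "\<not> balanced G q j (g j) (\<lambda>i. z (\<sigma> i) - z i)"
      using exists_generator_unbalancing_difference[OF S(1) g[unfolded G_def] q z[unfolded G_def]]
      unfolding G_def by blast
    have "\<not> balanced G q j (g j) (\<lambda>i. z (\<sigma> i) - y i)"
    proof
      assume "balanced G q j (g j) (\<lambda>i. z (\<sigma> i) - y i)"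
      from balanced_diff[OF this True] show False using \<sigma> by simp
    qed
    then show ?thesis using turn \<open>\<sigma> \<in> S\<close> by blast
  qed
qed

lemma not_player_can_win_if_perm_of_prime_order:
  fixes n m :: nat and S :: "(nat \<Rightarrow> nat) set"
  defines "G \<equiv> generate (sym_group n) S"
  assumes S: "S \<subseteq> carrier (sym_group n)" "id \<in> S"
    and g: "g \<in> G" "g ^^ p = id" "g \<noteq> id"
    and pq: "prime p" "prime q" "p \<noteq> q" "q dvd m"
  shows "\<not> player_can_win n m S"
proof -
  have G: "subgroup G (sym_group n)"
    unfolding G_def by (rule group.generate_is_subgroup[OF sym_group_is_group S(1)])
  obtain j where j: "g j \<noteq> j" using g(3) by (metis eq_id_iff)
  have "g permutes {1..n}" using sym_subgroup_permutes[OF G g(1)] .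
  then have j_n: "j \<in> {1..n}" "g j \<in> {1..n}"
    using j permutes_not_in by (fast, metis permutes_in_image permutes_not_in)
  have q: "prime (int q)" "\<not> int q dvd int p"
    using pq primes_dvd_imp_eq[of q p] by auto
  define z :: "nat \<Rightarrow> int" where "z = (\<lambda>i. if i = j then 1 else 0)"
  have "\<not> balanced G (int q) j (g j) z"
  proof
    assume "balanced G (int q) j (g j) z"
    then have "int q dvd z (id (g j)) - z (id j)"
      using sym_subgroup_id[OF G] unfolding balanced_def by blast
    with j have "q = 1" by (simp add: z_def)
    with pq(2) show False by simp
  qed
  moreover have "backward_invariant S (\<lambda>x. \<not> balanced G (int q) j (g j) x)"
    using backward_invariant_unbalanced[OF S g(1,2)[unfolded G_def] q]
    unfolding G_def .
  moreover have "balanced G (int q) j (g j) x" if "all_zero n m x" for x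
    using balanced_if_all_zero[OF G j_n _ that] pq(4) by simp
  ultimately show ?thesis using not_player_can_win_if_backward_invariant by blast
qed

theorem lemma6p2:
  fixes n m :: nat and S :: "(nat \<Rightarrow> nat) set"
  assumes "n > 0" and "m > 0"
    and "S \<subseteq> carrier (sym_group n)"
    and "id \<in> S"
    and "player_can_win n m S"
  shows "card (generate (sym_group n) S) = 1 \<or> m = 1 \<or>
         (\<exists>p a b. prime p \<and> a > 0 \<and> b > 0 \<and>
            card (generate (sym_group n) S) = p ^ a \<and> m = p ^ b)"
proof (rule ccontr)
  assume not_thesis: "\<not> ?thesis"
  define G where "G = generate (sym_group n) S"
  have G: "subgroup G (sym_group n)"
    unfolding G_def by (rule group.generate_is_subgroup[OF sym_group_is_group assms(3)])
  have "card G > 0"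
    using finite_sym_subgroup[OF G] sym_subgroup_id[OF G] card_gt_0_iff by blast
  moreover have "card G \<noteq> 1" "m \<noteq> 1"
    "\<not> (\<exists>p a b. prime p \<and> a > 0 \<and> b > 0 \<and> card G = p ^ a \<and> m = p ^ b)"
    using not_thesis unfolding G_def by auto
  ultimately obtain p q where pq: "prime p" "prime q" "p \<noteq> q" "p dvd card G" "q dvd m"
    using distinct_prime_factors_unless_prime_powers \<open>m > 0\<close> by blast
  obtain g where "g \<in> G" "g ^^ p = id" "g \<noteq> id"
    using sym_subgroup_exists_perm_of_prime_order[OF G pq(1,4)] by blast
  then show False
    using not_player_can_win_if_perm_of_prime_order[OF assms(3,4) _ _ _ pq(1,2,3,5)] assms(5)
    unfolding G_def by blast
qed

end
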